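(* Let $\mathcal{C}$ be a circle and $\mathcal{D}$ a central conic (an ellipse or a hyperbola) such that at least one nondegenerate triangle inscribed in $\mathcal{C}$ is circumscribed about $\mathcal{D}$. Let $\mathcal{P}$ be the family of all nondegenerate triangles inscribed in $\mathcal{C}$ and circumscribed about $\mathcal{D}$. Then $\mathcal{P}$ contains at most two right triangles.
   Context: A central conic is a non-degenerate ellipse (possibly a circle) or hyperbola with a center of symmetry. A triangle is circumscribed about a conic if each of its three sidelines is tangent to the conic. A triangle is inscribed in a circle if its vertices lie on it. A triangle is nondegenerate if its vertices are not collinear. *)

theory Defs
  imports "HOL-Analysis.Analysis"
begin

text \<open>Points of the Euclidean plane are pairs of reals.  A central conic with
center z is given by a symmetric bilinear form
  B(u,v) = a u1 v1 + b (u1 v2 + u2 v1) + c u2 v2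
as the set {x. B(x-z,x-z) = 1}.\<close>

definition cbil :: "real \<Rightarrow> real \<Rightarrow> real \<Rightarrow> real \<times> real \<Rightarrow> real \<times> real \<Rightarrow> real" where
  "cbil a b c u v = a * fst u * fst v + b * (fst u * snd v + snd u * fst v) + c * snd u * snd v"

definition conic_set :: "real \<Rightarrow> real \<Rightarrow> real \<Rightarrow> real \<times> real \<Rightarrow> (real \<times> real) set" where
  "conic_set a b c z = {x. cbil a b c (x - z) (x - z) = 1}"

text \<open>Non-degenerate (a c - b^2 nonzero) and real (nonempty): exactly the
ellipses (positive definite form) and hyperbolas (indefinite form).\<close>
definition central_conic :: "real \<Rightarrow> real \<Rightarrow> real \<Rightarrow> real \<times> real \<Rightarrow> bool" where
  "central_conic a b c z \<longleftrightarrow> a * c - b\<^sup>2 \<noteq> 0 \<and> conic_set a b c z \<noteq> {}"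

text \<open>The line through P and Q (P \<noteq> Q) is tangent to the conic: it is the
tangent line {X. B(x0-z, X-z) = 1} of the conic at some point x0 of the conic.\<close>
definition tangent_line :: "real \<Rightarrow> real \<Rightarrow> real \<Rightarrow> real \<times> real \<Rightarrow> real \<times> real \<Rightarrow> real \<times> real \<Rightarrow> bool" where
  "tangent_line a b c z P Q \<longleftrightarrow>
     (\<exists>x0 \<in> conic_set a b c z. cbil a b c (x0 - z) (P - z) = 1 \<and> cbil a b c (x0 - z) (Q - z) = 1)"

definition poncelet_triangle ::
  "real \<times> real \<Rightarrow> real \<Rightarrow> real \<Rightarrow> real \<Rightarrow> real \<Rightarrow> real \<times> real \<Rightarrow>
   real \<times> real \<Rightarrow> real \<times> real \<Rightarrow> real \<times> real \<Rightarrow> bool" where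
  "poncelet_triangle Oc r a b c z A B C \<longleftrightarrow>
     \<not> collinear {A, B, C} \<and>
     A \<in> sphere Oc r \<and> B \<in> sphere Oc r \<and> C \<in> sphere Oc r \<and>
     tangent_line a b c z A B \<and> tangent_line a b c z B C \<and> tangent_line a b c z C A"

definition right_triangle :: "real \<times> real \<Rightarrow> real \<times> real \<Rightarrow> real \<times> real \<Rightarrow> bool" where
  "right_triangle A B C \<longleftrightarrow>
     (B - A) \<bullet> (C - A) = 0 \<or> (A - B) \<bullet> (C - B) = 0 \<or> (A - C) \<bullet> (B - C) = 0"

end

theory Submission
  imports Defs
begin

text \<open>By Thales' theorem the hypotenuse of a right triangle inscribed in the circle is a
diameter, so the side of a right Poncelet triangle opposite the right angle touches the conic at
a point whose tangent passes through the centre Oc of the circle.  The points of contact of the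
tangents through a point lie on a line (its polar), and a line meets a nondegenerate central
conic at most twice; hence there are at most two such points.  Finally a Poncelet triangle is
determined by the point of contact x0 of one of its sides: that side is the chord cut out of the
circle by the tangent at x0, and the third vertex is cut out by the other tangent through an
endpoint of the chord.\<close>

lemma collinear_subset_hyperplane:
  fixes S :: "(real \<times> real) set"
  assumes "g \<noteq> 0" and "S \<subseteq> {x. g \<bullet> x = k}"
  shows "collinear S"
proof -
  have "aff_dim S \<le> aff_dim {x. g \<bullet> x = k}"
    using assms(2) by (rule aff_dim_subset)
  also have "\<dots> = 1"
    using assms(1) by simp
  finally show ?thesis
    by (simp add: collinear_aff_dim)
qed

lemma cbil_sym: "cbil a b c u v = cbil a b c v u"
  unfolding cbil_def by (simp add: algebra_simps)

lemma cbil_eq_inner: "cbil a b c u v = (a * fst u + b * snd u, b * fst u + c * snd u) \<bullet> v"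
  unfolding cbil_def by (simp add: inner_prod_def algebra_simps)

lemma cbil_1_0_1: "cbil 1 0 1 u v = u \<bullet> v"
  by (simp add: cbil_eq_inner inner_prod_def)

lemma collinear_cbil_level:
  assumes "k \<noteq> 0"
    and "cbil a b c u (X - z) = k" "cbil a b c u (Y - z) = k" "cbil a b c u (W - z) = k"
  shows "collinear {X, Y, W}"
proof -
  define g where "g = (a * fst u + b * snd u, b * fst u + c * snd u)"
  have level: "g \<bullet> P = k + g \<bullet> z" if "cbil a b c u (P - z) = k" for P
    using that by (simp add: cbil_eq_inner g_def inner_diff_right)
  have "g \<noteq> 0"
    using assms(1,2) by (auto simp: cbil_eq_inner g_def[symmetric])
  then show ?thesis
    by (rule collinear_subset_hyperplane) (use assms(2-4) level in auto)
qed

lemma cbil_add_scaleR: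
  "cbil a b c (u + s *\<^sub>R d) (u + s *\<^sub>R d) =
     cbil a b c u u + s * (2 * cbil a b c u d + s * cbil a b c d d)"
  unfolding cbil_def by (simp add: algebra_simps)

lemma cbil_lagrange:
  "cbil a b c u u * cbil a b c d d - (cbil a b c u d)\<^sup>2 =
     (a * c - b\<^sup>2) * (fst u * snd d - snd u * fst d)\<^sup>2"
  unfolding cbil_def by (simp add: power2_eq_square algebra_simps)

lemma cbil_scaleR: "cbil a b c (\<alpha> *\<^sub>R u) (\<beta> *\<^sub>R v) = \<alpha> * \<beta> * cbil a b c u v"
  unfolding cbil_def by (simp add: algebra_simps)

lemma conic_line_at_most_two:
  assumes det: "a * c - b\<^sup>2 \<noteq> 0" and "k \<noteq> 0"
    and on_conic: "cbil a b c (X - z) (X - z) = k" "cbil a b c (Y - z) (Y - z) = k"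
      "cbil a b c (W - z) (W - z) = k"
    and "collinear {X, Y, W}"
  shows "X = Y \<or> X = W \<or> Y = W"
proof (rule ccontr)
  assume distinct: "\<not> (X = Y \<or> X = W \<or> Y = W)"
  obtain d s t where Y: "Y - X = s *\<^sub>R d" and W: "W - X = t *\<^sub>R d"
    using \<open>collinear {X, Y, W}\<close> unfolding collinear_def by blast
  define u where "u = X - z"
  \<comment> \<open>The quadratic s \<mapsto> cbil (u + s d) (u + s d) - k has the three roots 0, s, t, so d is
    isotropic and conjugate to u; by nondegeneracy u is then parallel to d, hence isotropic.\<close>
  have "d \<noteq> 0" "s \<noteq> 0" "t \<noteq> 0"
    using distinct Y W by auto
  have "s \<noteq> t"
    using distinct Y W by (metis diff_add_cancel)
  have Yz: "Y - z = u + s *\<^sub>R d" and Wz: "W - z = u + t *\<^sub>R d"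
    using Y W unfolding u_def by (simp_all add: algebra_simps)
  have root_s: "2 * cbil a b c u d + s * cbil a b c d d = 0"
    using on_conic(1,2) cbil_add_scaleR[of a b c u s d] \<open>s \<noteq> 0\<close> by (simp add: Yz u_def)
  have root_t: "2 * cbil a b c u d + t * cbil a b c d d = 0"
    using on_conic(1,3) cbil_add_scaleR[of a b c u t d] \<open>t \<noteq> 0\<close> by (simp add: Wz u_def)
  have "(s - t) * cbil a b c d d = 0"
    using root_s root_t by algebra
  then have null: "cbil a b c d d = 0" and "cbil a b c u d = 0"
    using \<open>s \<noteq> t\<close> root_s by auto
  then have "fst u * snd d - snd u * fst d = 0"
    using cbil_lagrange[of a b c u d] det by simp
  then have "(d \<bullet> d) *\<^sub>R u = (u \<bullet> d) *\<^sub>R d"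
    by (simp add: inner_prod_def prod_eq_iff algebra_simps power2_eq_square)
  then have "(d \<bullet> d) * (d \<bullet> d) * k = cbil a b c ((u \<bullet> d) *\<^sub>R d) ((u \<bullet> d) *\<^sub>R d)"
    by (metis cbil_scaleR on_conic(1) u_def)
  also have "\<dots> = 0"
    by (simp add: cbil_scaleR null)
  finally have "(d \<bullet> d) * (d \<bullet> d) * k = 0" .
  then show False
    using \<open>d \<noteq> 0\<close> \<open>k \<noteq> 0\<close> by simp
qed

lemma sphere_line_at_most_two:
  fixes p X Y W :: "real \<times> real"
  assumes "X \<in> sphere p r" "Y \<in> sphere p r" "W \<in> sphere p r" "collinear {X, Y, W}"
  shows "X = Y \<or> X = W \<or> Y = W"
proof (cases "r = 0")
  case False
  have "cbil 1 0 1 (P - p) (P - p) = r\<^sup>2" if "P \<in> sphere p r" for P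
    using that by (simp add: cbil_1_0_1 dot_square_norm dist_norm norm_minus_commute)
  then show ?thesis
    using conic_line_at_most_two[where a = 1 and b = 0 and c = 1 and k = "r\<^sup>2" and z = p] assms False
    by simp
qed (use assms in simp)

abbreviation on_tangent ::
  "real \<Rightarrow> real \<Rightarrow> real \<Rightarrow> real \<times> real \<Rightarrow> real \<times> real \<Rightarrow> real \<times> real \<Rightarrow> bool" where
  "on_tangent a b c z x0 X \<equiv> cbil a b c (x0 - z) (X - z) = 1"

lemma collinear_on_tangent:
  assumes "on_tangent a b c z x0 X" "on_tangent a b c z x0 Y" "on_tangent a b c z x0 W"
  shows "collinear {X, Y, W}"
  by (rule collinear_cbil_level[where k = 1]) (use assms in simp_all)

lemma tangents_through_point_at_most_two:
  assumes det: "a * c - b\<^sup>2 \<noteq> 0"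
    and "x \<in> conic_set a b c z" "y \<in> conic_set a b c z" "w \<in> conic_set a b c z"
    and "on_tangent a b c z x p" "on_tangent a b c z y p" "on_tangent a b c z w p"
  shows "x = y \<or> x = w \<or> y = w"
proof -
  have "collinear {x, y, w}"
    by (rule collinear_cbil_level[where k = 1 and u = "p - z"])
      (use assms in \<open>simp_all add: cbil_sym\<close>)
  then show ?thesis
    using conic_line_at_most_two[OF det, where k = 1] assms(2-4) by (simp add: conic_set_def)
qed

lemma on_tangent_midpoint:
  assumes "on_tangent a b c z x0 P" "on_tangent a b c z x0 Q"
  shows "on_tangent a b c z x0 (midpoint P Q)"
proof -
  have "2 * cbil a b c (x0 - z) (midpoint P Q - z) =
      cbil a b c (x0 - z) (P - z) + cbil a b c (x0 - z) (Q - z)"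
    unfolding cbil_def midpoint_def by (simp add: field_simps)
  then show ?thesis
    using assms by simp
qed

lemma inscribed_right_angle_midpoint:
  fixes p X Y V :: "real \<times> real"
  assumes on_circle: "X \<in> sphere p r" "Y \<in> sphere p r" "V \<in> sphere p r"
    and right_angle: "(X - V) \<bullet> (Y - V) = 0" and "\<not> collinear {X, Y, V}"
  shows "midpoint X Y = p"
proof (rule ccontr)
  assume "midpoint X Y \<noteq> p"
  define x y v where "x = X - p" and "y = Y - p" and "v = V - p"
  have "x + y \<noteq> 0"
    using \<open>midpoint X Y \<noteq> p\<close> by (auto simp: x_def y_def midpoint_eq_iff algebra_simps)
  have sq: "(P - p) \<bullet> (P - p) = r\<^sup>2" if "P \<in> sphere p r" for P
    using that by (simp add: dot_square_norm dist_norm norm_minus_commute)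
  have "(x - v) \<bullet> (y - v) = 0"
    using right_angle by (simp add: x_def y_def v_def)
  then have "(x + y) \<bullet> v = r\<^sup>2 + x \<bullet> y"
    using sq[OF on_circle(3)]
    by (simp add: v_def[symmetric] inner_diff_left inner_diff_right inner_add_left inner_add_right
        inner_commute)
  moreover have "(x + y) \<bullet> x = r\<^sup>2 + x \<bullet> y" "(x + y) \<bullet> y = r\<^sup>2 + x \<bullet> y"
    using sq[OF on_circle(1)] sq[OF on_circle(2)]
    by (simp_all add: x_def[symmetric] y_def[symmetric] inner_add_right inner_commute)
  ultimately have "{X, Y, V} \<subseteq> {P. (x + y) \<bullet> P = r\<^sup>2 + x \<bullet> y + (x + y) \<bullet> p}"
    by (simp add: x_def y_def v_def inner_diff_right)
  then have "collinear {X, Y, V}"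
    by (rule collinear_subset_hyperplane[OF \<open>x + y \<noteq> 0\<close>])
  with \<open>\<not> collinear {X, Y, V}\<close> show False ..
qed

lemma card_le_2_if_no_three_distinct:
  assumes "\<And>x y w. x \<in> S \<Longrightarrow> y \<in> S \<Longrightarrow> w \<in> S \<Longrightarrow> x = y \<or> x = w \<or> y = w"
  shows "finite S \<and> card S \<le> 2"
proof -
  obtain x y where "S \<subseteq> {x, y}"
  proof (cases "\<exists>x\<in>S. \<exists>y\<in>S. x \<noteq> y")
    case True
    then obtain x y where "x \<in> S" "y \<in> S" "x \<noteq> y"
      by blast
    with assms have "S \<subseteq> {x, y}"
      by blast
    then show ?thesis
      using that by blast
  qed (use that in blast)
  moreover have "card {x, y} \<le> 2"
    by (cases "x = y") simp_all
  ultimately show ?thesis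
    using card_mono[of "{x, y}" S] finite_subset[of S "{x, y}"] by simp
qed

lemma poncelet_triangle_rotate:
  "poncelet_triangle Oc r a b c z P Q R \<Longrightarrow> poncelet_triangle Oc r a b c z Q R P"
  unfolding poncelet_triangle_def by (simp add: insert_commute)

lemma poncelet_triangle_swap:
  "poncelet_triangle Oc r a b c z P Q R \<Longrightarrow> poncelet_triangle Oc r a b c z Q P R"
  unfolding poncelet_triangle_def tangent_line_def by (auto simp: insert_commute)

lemma poncelet_triangle_vertices_distinct:
  "poncelet_triangle Oc r a b c z P Q R \<Longrightarrow> P \<noteq> Q \<and> Q \<noteq> R \<and> P \<noteq> R"
  unfolding poncelet_triangle_def by (auto simp: insert_commute)

lemma poncelet_triangle_not_on_one_tangent:
  assumes "poncelet_triangle Oc r a b c z P Q R" "on_tangent a b c z x0 P" "on_tangent a b c z x0 Q"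
  shows "\<not> on_tangent a b c z x0 R"
  using assms collinear_on_tangent unfolding poncelet_triangle_def by blast

lemma poncelet_third_vertex_unique:
  assumes det: "a * c - b\<^sup>2 \<noteq> 0"
    and PQR: "poncelet_triangle Oc r a b c z P Q R" and PQR': "poncelet_triangle Oc r a b c z P Q R'"
  shows "R = R'"
proof -
  obtain x1 where x1: "x1 \<in> conic_set a b c z" "on_tangent a b c z x1 P" "on_tangent a b c z x1 Q"
    using PQR unfolding poncelet_triangle_def tangent_line_def by blast
  obtain x where x: "x \<in> conic_set a b c z" "on_tangent a b c z x R" "on_tangent a b c z x P"
    using PQR unfolding poncelet_triangle_def tangent_line_def by blast
  obtain x' where x': "x' \<in> conic_set a b c z" "on_tangent a b c z x' R'" "on_tangent a b c z x' P"
    using PQR' unfolding poncelet_triangle_def tangent_line_def by blast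
  have "x \<noteq> x1" and "x' \<noteq> x1"
    using poncelet_triangle_not_on_one_tangent[OF PQR x1(2,3)] x
      poncelet_triangle_not_on_one_tangent[OF PQR' x1(2,3)] x' by auto
  then have "x' = x"
    using tangents_through_point_at_most_two[OF det x(1) x'(1) x1(1) x(3) x'(3) x1(2)] by blast
  then have "collinear {P, R, R'}"
    using x x' collinear_on_tangent by metis
  moreover have "P \<noteq> R" "P \<noteq> R'"
    using PQR PQR' poncelet_triangle_vertices_distinct by blast+
  ultimately show "R = R'"
    using PQR PQR' sphere_line_at_most_two[of P Oc r R R'] unfolding poncelet_triangle_def by blast
qed

definition poncelet_side_tangent_at ::
  "real \<times> real \<Rightarrow> real \<Rightarrow> real \<Rightarrow> real \<Rightarrow> real \<Rightarrow> real \<times> real \<Rightarrow>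
   (real \<times> real) set \<Rightarrow> real \<times> real \<Rightarrow> bool" where
  "poncelet_side_tangent_at Oc r a b c z T x0 \<longleftrightarrow>
     (\<exists>P Q R. T = {P, Q, R} \<and> poncelet_triangle Oc r a b c z P Q R \<and>
       on_tangent a b c z x0 P \<and> on_tangent a b c z x0 Q)"

lemma poncelet_side_tangent_at_unique:
  assumes det: "a * c - b\<^sup>2 \<noteq> 0"
    and "poncelet_side_tangent_at Oc r a b c z T x0" "poncelet_side_tangent_at Oc r a b c z T' x0"
  shows "T = T'"
proof -
  obtain P Q R where T: "T = {P, Q, R}" and PQR: "poncelet_triangle Oc r a b c z P Q R"
    and PQ: "on_tangent a b c z x0 P" "on_tangent a b c z x0 Q"
    using assms(2) unfolding poncelet_side_tangent_at_def by blast
  obtain P' Q' R' where T': "T' = {P', Q', R'}" and PQR': "poncelet_triangle Oc r a b c z P' Q' R'"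
    and PQ': "on_tangent a b c z x0 P'" "on_tangent a b c z x0 Q'"
    using assms(3) unfolding poncelet_side_tangent_at_def by blast
  have on_side: "X = P \<or> X = Q" if "X \<in> sphere Oc r" "on_tangent a b c z x0 X" for X
    using sphere_line_at_most_two[of P Oc r Q X] collinear_on_tangent[OF PQ that(2)]
      poncelet_triangle_vertices_distinct[OF PQR] PQR that(1)
    unfolding poncelet_triangle_def by blast
  have "P' \<noteq> Q'"
    using poncelet_triangle_vertices_distinct[OF PQR'] by blast
  then consider "P' = P" "Q' = Q" | "P' = Q" "Q' = P"
    using on_side[of P'] on_side[of Q'] PQR' PQ' unfolding poncelet_triangle_def by blast
  then show ?thesis
  proof cases
    case 1
    then show ?thesis
      using poncelet_third_vertex_unique[OF det PQR] PQR' T T' by simp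
  next
    case 2
    then show ?thesis
      using poncelet_third_vertex_unique[OF det poncelet_triangle_swap[OF PQR]] PQR' T T'
      by (simp add: insert_commute)
  qed
qed

lemma right_poncelet_triangle_hypotenuse:
  assumes "poncelet_triangle Oc r a b c z A B C" "right_triangle A B C"
  shows "\<exists>P Q R. {A, B, C} = {P, Q, R} \<and> poncelet_triangle Oc r a b c z P Q R \<and>
    (P - R) \<bullet> (Q - R) = 0"
proof -
  from assms(2) consider "(B - A) \<bullet> (C - A) = 0" | "(C - B) \<bullet> (A - B) = 0" | "(A - C) \<bullet> (B - C) = 0"
    unfolding right_triangle_def by (auto simp: inner_commute)
  then show ?thesis
  proof cases
    case 1
    moreover have "{A, B, C} = {B, C, A}"
      by blast
    ultimately show ?thesis
      using poncelet_triangle_rotate[OF assms(1)] by blast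
  next
    case 2
    moreover have "{A, B, C} = {C, A, B}"
      by blast
    ultimately show ?thesis
      using poncelet_triangle_rotate[OF poncelet_triangle_rotate[OF assms(1)]] by blast
  qed (use assms(1) in blast)
qed

lemma right_poncelet_triangle_tangent_through_center:
  assumes "poncelet_triangle Oc r a b c z A B C" "right_triangle A B C"
  shows "\<exists>x0 \<in> conic_set a b c z.
    on_tangent a b c z x0 Oc \<and> poncelet_side_tangent_at Oc r a b c z {A, B, C} x0"
proof -
  obtain P Q R where PQR: "{A, B, C} = {P, Q, R}" "poncelet_triangle Oc r a b c z P Q R"
    and right_angle: "(P - R) \<bullet> (Q - R) = 0"
    using right_poncelet_triangle_hypotenuse[OF assms] by blast
  obtain x0 where x0: "x0 \<in> conic_set a b c z" "on_tangent a b c z x0 P" "on_tangent a b c z x0 Q"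
    using PQR(2) unfolding poncelet_triangle_def tangent_line_def by blast
  have "midpoint P Q = Oc"
    using inscribed_right_angle_midpoint[OF _ _ _ right_angle] PQR(2)
    unfolding poncelet_triangle_def by blast
  then have "on_tangent a b c z x0 Oc"
    using on_tangent_midpoint[OF x0(2,3)] by simp
  with PQR x0 show ?thesis
    unfolding poncelet_side_tangent_at_def by blast
qed

theorem proposition2p1:
  fixes Oc :: "real \<times> real" and r a b c :: real and z :: "real \<times> real"
  assumes "r > 0"
    and "central_conic a b c z"
    and "\<exists>A B C. poncelet_triangle Oc r a b c z A B C"
  shows "finite {T. \<exists>A B C. T = {A, B, C} \<and> poncelet_triangle Oc r a b c z A B C \<and> right_triangle A B C}
       \<and> card {T. \<exists>A B C. T = {A, B, C} \<and> poncelet_triangle Oc r a b c z A B C \<and> right_triangle A B C} \<le> 2"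
proof -
  have det: "a * c - b\<^sup>2 \<noteq> 0"
    using assms(2) unfolding central_conic_def by simp
  let ?S = "{T. \<exists>A B C. T = {A, B, C} \<and> poncelet_triangle Oc r a b c z A B C \<and> right_triangle A B C}"
  have tangency_point: "\<exists>x0 \<in> conic_set a b c z.
      on_tangent a b c z x0 Oc \<and> poncelet_side_tangent_at Oc r a b c z T x0"
    if "T \<in> ?S" for T
  proof -
    from \<open>T \<in> ?S\<close> obtain A B C
      where T: "T = {A, B, C}" "poncelet_triangle Oc r a b c z A B C" "right_triangle A B C"
      unfolding mem_Collect_eq by (elim exE conjE)
    show ?thesis
      using right_poncelet_triangle_tangent_through_center[OF T(2,3)] unfolding T(1) .
  qed
  have "T1 = T2 \<or> T1 = T3 \<or> T2 = T3" if S: "T1 \<in> ?S" "T2 \<in> ?S" "T3 \<in> ?S" for T1 T2 T3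
  proof -
    obtain x1 x2 x3 where x: "x1 \<in> conic_set a b c z" "x2 \<in> conic_set a b c z" "x3 \<in> conic_set a b c z"
      "on_tangent a b c z x1 Oc" "on_tangent a b c z x2 Oc" "on_tangent a b c z x3 Oc"
      and T: "poncelet_side_tangent_at Oc r a b c z T1 x1" "poncelet_side_tangent_at Oc r a b c z T2 x2"
      "poncelet_side_tangent_at Oc r a b c z T3 x3"
      using tangency_point[OF S(1)] tangency_point[OF S(2)] tangency_point[OF S(3)] by blast
    have "x1 = x2 \<or> x1 = x3 \<or> x2 = x3"
      using tangents_through_point_at_most_two[OF det x] .
    then show ?thesis
      using poncelet_side_tangent_at_unique[OF det] T by blast
  qed
  then show ?thesis
    by (rule card_le_2_if_no_three_distinct)
qed

end
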